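(* Let $\alpha > 0$, $\beta > 0$, $T > 0$, and $\tau > 0$ with $T/\tau \in \mathbb{N}$. For $u \in \mathrm{H}^1(0,T)$ let $v$ be its upwinded interpolant on $[0,T]$. Then there is a constant $C$, independent of $\alpha$ and $\tau$, such that $$\int_0^T | u - v|^2 \leq C \tau^2 \int_0^T |\dot u|^2,$$ where $\dot u$ denotes the derivative of $u$.
   Context: Given $\alpha, \beta > 0$ and the mesh of nodes $k\tau$, the upwinded interpolant of a continuous function $u$ is the unique continuous function $v$ with $v(k\tau) = u(k\tau)$ at every node and which, on each mesh interval $[k\tau, (k+1)\tau]$, is of the form $v(t) = c_1 + c_2 \exp(-\beta t/\alpha)$ for constants $c_1, c_2$ (depending on the interval). *)

theory Defs
  imports "HOL-Analysis.Analysis"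
begin

definition upwinded_interpolant ::
  "real \<Rightarrow> real \<Rightarrow> real \<Rightarrow> real \<Rightarrow> (real \<Rightarrow> real) \<Rightarrow> (real \<Rightarrow> real) \<Rightarrow> bool" where
  "upwinded_interpolant \<alpha> \<beta> \<tau> T u v \<longleftrightarrow>
     continuous_on {0..T} v \<and>
     (\<forall>k::nat. real k * \<tau> \<le> T \<longrightarrow> v (real k * \<tau>) = u (real k * \<tau>)) \<and>
     (\<forall>k::nat. real (Suc k) * \<tau> \<le> T \<longrightarrow>
        (\<exists>c1 c2. \<forall>t\<in>{real k * \<tau> .. real (Suc k) * \<tau>}.
            v t = c1 + c2 * exp (- \<beta> * t / \<alpha>)))"

end

theory Submission
  imports Defs
begin

text \<open>On a mesh cell \<open>[a, b]\<close> the function \<open>c1 + c2 exp(-\<beta> t / \<alpha>)\<close> is monotone, so the upwinded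
  interpolant never leaves the segment between the nodal values \<open>u a\<close> and \<open>u b\<close>. Hence
  \<open>|u t - v t|\<close> is at most \<open>max |u t - u a| |u t - u b|\<close>, and by Cauchy--Schwarz each of these
  squared is bounded by \<open>(b - a) \<integral>\<^sub>a\<^sup>b |u'|\<^sup>2\<close>. Integrating over the cell gives the factor
  \<open>\<tau>\<^sup>2\<close> independently of \<open>\<alpha>\<close>, and summing over the cells gives the theorem with \<open>C = 1\<close>.\<close>

lemma square_integral_le_length_times_integral_square:
  fixes f :: "real \<Rightarrow> real"
  assumes f: "f integrable_on {a..b}" and f2: "(\<lambda>x. (f x)\<^sup>2) integrable_on {a..b}" and "a \<le> b"
  shows "(integral {a..b} f)\<^sup>2 \<le> (b - a) * integral {a..b} (\<lambda>x. (f x)\<^sup>2)"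
proof -
  define I where "I = integral {a..b} f"
  define S where "S = integral {a..b} (\<lambda>x. (f x)\<^sup>2)"
  \<comment> \<open>expand \<open>0 \<le> \<integral>((b - a) f - \<integral>f)\<^sup>2\<close>\<close>
  have square: "((b - a) * f x - I)\<^sup>2 = (b - a)\<^sup>2 * (f x)\<^sup>2 - (2 * (b - a) * I) * f x + I\<^sup>2" for x
    by (simp add: power2_eq_square algebra_simps)
  have quadratic: "(\<lambda>x. (b - a)\<^sup>2 * (f x)\<^sup>2) integrable_on {a..b}"
    and linear: "(\<lambda>x. (2 * (b - a) * I) * f x) integrable_on {a..b}"
    using f f2 by (auto intro: integrable_on_mult_right)
  note difference = integrable_diff[OF quadratic linear]
  have "0 \<le> integral {a..b} (\<lambda>x. (b - a)\<^sup>2 * (f x)\<^sup>2 - (2 * (b - a) * I) * f x + I\<^sup>2)"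
    using integrable_add[OF difference integrable_const_ivl]
    by (rule integral_nonneg) (metis square zero_le_power2)
  also have "\<dots> = integral {a..b} (\<lambda>x. (b - a)\<^sup>2 * (f x)\<^sup>2)
      - integral {a..b} (\<lambda>x. (2 * (b - a) * I) * f x) + integral {a..b} (\<lambda>x. I\<^sup>2)"
    by (simp only: integral_add[OF difference integrable_const_ivl] integral_diff[OF quadratic linear])
  also have "\<dots> = (b - a)\<^sup>2 * S - 2 * (b - a) * I * I + I\<^sup>2 * (b - a)"
    using \<open>a \<le> b\<close> by (simp add: I_def S_def)
  finally have "0 \<le> (b - a) * ((b - a) * S - I\<^sup>2)"
    by (simp add: power2_eq_square algebra_simps)
  then show ?thesis
    using \<open>a \<le> b\<close> by (cases "a = b") (auto simp: I_def S_def zero_le_mult_iff)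
qed

lemma affine_of_antimono_in_closed_segment:
  fixes g :: "real \<Rightarrow> real"
  assumes "antimono_on {a..b} g" and "t \<in> {a..b}"
  shows "c1 + c2 * g t \<in> closed_segment (c1 + c2 * g a) (c1 + c2 * g b)"
proof -
  have "g b \<le> g t" "g t \<le> g a"
    using assms by (auto simp: monotone_on_def)
  then have "c2 * g b \<le> c2 * g t \<and> c2 * g t \<le> c2 * g a \<or> c2 * g a \<le> c2 * g t \<and> c2 * g t \<le> c2 * g b"
    by (cases "c2 \<ge> 0") (auto intro: mult_left_mono mult_left_mono_neg)
  then show ?thesis
    by (auto simp: closed_segment_eq_real_ivl)
qed

lemma square_dist_closed_segment_le_max:
  fixes x w y z :: real
  assumes "w \<in> closed_segment y z"
  shows "(x - w)\<^sup>2 \<le> max ((x - y)\<^sup>2) ((x - z)\<^sup>2)"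
proof -
  have "\<bar>x - w\<bar> \<le> max \<bar>x - y\<bar> \<bar>x - z\<bar>"
    using assms by (auto simp: closed_segment_eq_real_ivl split: if_splits)
  then have "(x - w)\<^sup>2 \<le> (max \<bar>x - y\<bar> \<bar>x - z\<bar>)\<^sup>2"
    by (metis abs_ge_zero power2_abs power_mono)
  also have "\<dots> = max ((x - y)\<^sup>2) ((x - z)\<^sup>2)"
    by (simp add: max_def abs_le_square_iff)
  finally show ?thesis .
qed

lemma indefinite_integral_rebase:
  fixes u u' :: "real \<Rightarrow> real"
  assumes u': "u' integrable_on {c..d}" and u: "\<forall>t\<in>{c..d}. u t = u c + integral {c..t} u'"
    and "c \<le> a" and "t \<in> {a..d}"
  shows "u t = u a + integral {a..t} u'"
proof -
  have "a \<in> {c..d}" "t \<in> {c..d}"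
    using \<open>c \<le> a\<close> \<open>t \<in> {a..d}\<close> by auto
  then have "u t = u c + integral {c..t} u'" "u a = u c + integral {c..a} u'"
    using u by blast+
  moreover have "u' integrable_on {c..t}"
    using integrable_subinterval_real[OF u'] \<open>t \<in> {c..d}\<close> by auto
  then have "integral {c..t} u' = integral {c..a} u' + integral {a..t} u'"
    using \<open>c \<le> a\<close> \<open>t \<in> {a..d}\<close> by (simp add: Henstock_Kurzweil_Integration.integral_combine)
  ultimately show ?thesis
    by linarith
qed

lemma square_dist_to_nodal_segment_le:
  fixes u u' :: "real \<Rightarrow> real"
  assumes "t \<in> {a..b}"
    and u': "u' integrable_on {a..b}" and u'2: "(\<lambda>x. (u' x)\<^sup>2) integrable_on {a..b}"
    and u: "\<forall>s\<in>{a..b}. u s = u a + integral {a..s} u'"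
    and w: "w \<in> closed_segment (u a) (u b)"
  shows "(u t - w)\<^sup>2 \<le> (b - a) * integral {a..b} (\<lambda>x. (u' x)\<^sup>2)"
proof -
  have ta: "a \<le> t" and tb: "t \<le> b"
    using \<open>t \<in> {a..b}\<close> by auto
  define S where "S = integral {a..b} (\<lambda>x. (u' x)\<^sup>2)"
  define Sl where "Sl = integral {a..t} (\<lambda>x. (u' x)\<^sup>2)"
  define Sr where "Sr = integral {t..b} (\<lambda>x. (u' x)\<^sup>2)"
  have left: "u' integrable_on {a..t}" "(\<lambda>x. (u' x)\<^sup>2) integrable_on {a..t}"
    and right: "u' integrable_on {t..b}" "(\<lambda>x. (u' x)\<^sup>2) integrable_on {t..b}"
    using integrable_subinterval_real[OF u'] integrable_subinterval_real[OF u'2] ta tb by auto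
  have "S = Sl + Sr"
    unfolding S_def Sl_def Sr_def
    using Henstock_Kurzweil_Integration.integral_combine[OF ta tb u'2] by simp
  moreover have "0 \<le> Sl" "0 \<le> Sr"
    unfolding Sl_def Sr_def using left right by (auto intro: integral_nonneg)
  ultimately have "(t - a) * Sl \<le> (b - a) * S" "(b - t) * Sr \<le> (b - a) * S"
    using ta tb by (intro mult_mono; linarith)+
  moreover have "(u t - u a)\<^sup>2 \<le> (t - a) * Sl"
    using bspec[OF u \<open>t \<in> {a..b}\<close>] square_integral_le_length_times_integral_square[OF left ta]
    by (simp add: Sl_def)
  moreover have "(u t - u b)\<^sup>2 \<le> (b - t) * Sr"
    using indefinite_integral_rebase[OF u' u ta, of b] tb
      square_integral_le_length_times_integral_square[OF right tb]
    by (simp add: Sr_def power2_commute)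
  ultimately have "(u t - u a)\<^sup>2 \<le> (b - a) * S" "(u t - u b)\<^sup>2 \<le> (b - a) * S"
    by linarith+
  then show ?thesis
    using square_dist_closed_segment_le_max[OF w, of "u t"] unfolding S_def by linarith
qed

lemma integral_square_dist_to_nodal_segment_le:
  fixes u u' v :: "real \<Rightarrow> real"
  assumes u': "u' integrable_on {a..b}" and u'2: "(\<lambda>x. (u' x)\<^sup>2) integrable_on {a..b}"
    and u: "\<forall>s\<in>{a..b}. u s = u a + integral {a..s} u'"
    and v: "\<forall>s\<in>{a..b}. v s \<in> closed_segment (u a) (u b)"
    and err: "(\<lambda>s. (u s - v s)\<^sup>2) integrable_on {a..b}" and "a \<le> b"
  shows "integral {a..b} (\<lambda>s. (u s - v s)\<^sup>2) \<le> (b - a)\<^sup>2 * integral {a..b} (\<lambda>x. (u' x)\<^sup>2)"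
proof -
  have "integral {a..b} (\<lambda>s. (u s - v s)\<^sup>2)
      \<le> integral {a..b} (\<lambda>s. (b - a) * integral {a..b} (\<lambda>x. (u' x)\<^sup>2))"
  proof (rule integral_le[OF err integrable_const_ivl])
    fix s assume "s \<in> {a..b}"
    then show "(u s - v s)\<^sup>2 \<le> (b - a) * integral {a..b} (\<lambda>x. (u' x)\<^sup>2)"
      using v by (blast intro: square_dist_to_nodal_segment_le[OF _ u' u'2 u])
  qed
  also have "\<dots> = (b - a)\<^sup>2 * integral {a..b} (\<lambda>x. (u' x)\<^sup>2)"
    using \<open>a \<le> b\<close> by (simp add: power2_eq_square)
  finally show ?thesis .
qed

lemma upwinded_interpolant_in_closed_segment:
  assumes v: "upwinded_interpolant \<alpha> \<beta> \<tau> T u v" and "\<alpha> > 0" "\<beta> > 0"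
    and "real (Suc k) * \<tau> \<le> T" and t: "t \<in> {real k * \<tau>..real (Suc k) * \<tau>}"
  shows "v t \<in> closed_segment (u (real k * \<tau>)) (u (real (Suc k) * \<tau>))"
proof -
  obtain c1 c2 where
    v_eq: "\<forall>s\<in>{real k * \<tau>..real (Suc k) * \<tau>}. v s = c1 + c2 * exp (- \<beta> * s / \<alpha>)"
    using v \<open>real (Suc k) * \<tau> \<le> T\<close> unfolding upwinded_interpolant_def by blast
  have "real k * \<tau> \<le> T"
    using t \<open>real (Suc k) * \<tau> \<le> T\<close> by auto
  then have nodes: "v (real k * \<tau>) = u (real k * \<tau>)" "v (real (Suc k) * \<tau>) = u (real (Suc k) * \<tau>)"
    using v \<open>real (Suc k) * \<tau> \<le> T\<close> unfolding upwinded_interpolant_def by blast+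
  have cell: "real k * \<tau> \<le> real (Suc k) * \<tau>"
    using t by auto
  have vt: "v t = c1 + c2 * exp (- \<beta> * t / \<alpha>)"
    and ua: "u (real k * \<tau>) = c1 + c2 * exp (- \<beta> * (real k * \<tau>) / \<alpha>)"
    and ub: "u (real (Suc k) * \<tau>) = c1 + c2 * exp (- \<beta> * (real (Suc k) * \<tau>) / \<alpha>)"
    using v_eq t cell nodes by (metis atLeastAtMost_iff order_refl)+
  have "antimono_on {real k * \<tau>..real (Suc k) * \<tau>} (\<lambda>s. exp (- \<beta> * s / \<alpha>))"
    using \<open>\<alpha> > 0\<close> \<open>\<beta> > 0\<close> by (auto simp: monotone_on_def divide_right_mono)
  then show ?thesis
    unfolding vt ua ub by (rule affine_of_antimono_in_closed_segment[OF _ t])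
qed

lemma integral_le_by_uniform_mesh_cells:
  fixes f g :: "real \<Rightarrow> real"
  assumes f: "f integrable_on {0..real N * \<tau>}" and g: "g integrable_on {0..real N * \<tau>}"
    and "\<tau> \<ge> 0"
    and cells: "\<And>k. k < N \<Longrightarrow>
      integral {real k * \<tau>..real (Suc k) * \<tau>} f \<le> integral {real k * \<tau>..real (Suc k) * \<tau>} g"
  shows "integral {0..real N * \<tau>} f \<le> integral {0..real N * \<tau>} g"
proof -
  have "integral {0..real m * \<tau>} f \<le> integral {0..real m * \<tau>} g" if "m \<le> N" for m
    using that
  proof (induction m)
    case 0
    then show ?case by simp
  next
    case (Suc m)
    have "real (Suc m) * \<tau> \<le> real N * \<tau>"
      using Suc.prems \<open>\<tau> \<ge> 0\<close> by (intro mult_right_mono) auto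
    then have sub: "{0..real (Suc m) * \<tau>} \<subseteq> {0..real N * \<tau>}"
      by auto
    have split: "integral {0..real (Suc m) * \<tau>} h
        = integral {0..real m * \<tau>} h + integral {real m * \<tau>..real (Suc m) * \<tau>} h"
      if "h integrable_on {0..real (Suc m) * \<tau>}" for h :: "real \<Rightarrow> real"
      using Henstock_Kurzweil_Integration.integral_combine[OF _ _ that, of "real m * \<tau>"] \<open>\<tau> \<ge> 0\<close>
      by (simp add: mult_right_mono)
    show ?case
      using split[OF integrable_subinterval_real[OF f sub]] split[OF integrable_subinterval_real[OF g sub]]
        Suc cells[of m] by simp
  qed
  then show ?thesis
    by simp
qed

lemma upwinded_interpolant_cell_error:
  fixes u u' v :: "real \<Rightarrow> real"
  assumes v: "upwinded_interpolant \<alpha> \<beta> \<tau> T u v" and "\<alpha> > 0" "\<beta> > 0" "\<tau> \<ge> 0"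
    and "real (Suc k) * \<tau> \<le> T"
    and u': "u' integrable_on {0..T}" and u'2: "(\<lambda>t. (u' t)\<^sup>2) integrable_on {0..T}"
    and u: "\<forall>t\<in>{0..T}. u t = u 0 + integral {0..t} u'"
    and err: "(\<lambda>t. (u t - v t)\<^sup>2) integrable_on {0..T}"
  shows "integral {real k * \<tau>..real (Suc k) * \<tau>} (\<lambda>t. (u t - v t)\<^sup>2)
    \<le> \<tau>\<^sup>2 * integral {real k * \<tau>..real (Suc k) * \<tau>} (\<lambda>t. (u' t)\<^sup>2)"
proof -
  have cell: "0 \<le> real k * \<tau>" "real k * \<tau> \<le> real (Suc k) * \<tau>"
    using \<open>\<tau> \<ge> 0\<close> by (auto intro: mult_right_mono)
  then have sub: "{real k * \<tau>..real (Suc k) * \<tau>} \<subseteq> {0..T}"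
    using \<open>real (Suc k) * \<tau> \<le> T\<close> by auto
  have "integral {real k * \<tau>..real (Suc k) * \<tau>} (\<lambda>t. (u t - v t)\<^sup>2)
      \<le> (real (Suc k) * \<tau> - real k * \<tau>)\<^sup>2 * integral {real k * \<tau>..real (Suc k) * \<tau>} (\<lambda>t. (u' t)\<^sup>2)"
  proof (rule integral_square_dist_to_nodal_segment_le)
    show "\<forall>s\<in>{real k * \<tau>..real (Suc k) * \<tau>}. u s = u (real k * \<tau>) + integral {real k * \<tau>..s} u'"
    proof
      fix s assume "s \<in> {real k * \<tau>..real (Suc k) * \<tau>}"
      with cell sub show "u s = u (real k * \<tau>) + integral {real k * \<tau>..s} u'"
        by (intro indefinite_integral_rebase[OF u' u]) auto
    qed
    show "\<forall>s\<in>{real k * \<tau>..real (Suc k) * \<tau>}.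
        v s \<in> closed_segment (u (real k * \<tau>)) (u (real (Suc k) * \<tau>))"
      using upwinded_interpolant_in_closed_segment[OF v \<open>\<alpha> > 0\<close> \<open>\<beta> > 0\<close> \<open>real (Suc k) * \<tau> \<le> T\<close>]
      by blast
  qed (use integrable_subinterval_real[OF _ sub] u' u'2 err cell in auto)
  then show ?thesis
    by (simp add: algebra_simps)
qed

theorem proposition9:
  fixes \<beta> T :: real
  assumes "\<beta> > 0" and "T > 0"
  shows "\<exists>C::real. \<forall>(\<alpha>::real) (\<tau>::real) (u::real \<Rightarrow> real) (u'::real \<Rightarrow> real) (v::real \<Rightarrow> real).
     \<alpha> > 0 \<longrightarrow> \<tau> > 0 \<longrightarrow> T / \<tau> \<in> \<nat> \<longrightarrow>
     u' integrable_on {0..T} \<longrightarrow> (\<lambda>t. (u' t)\<^sup>2) integrable_on {0..T} \<longrightarrow>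
     (\<forall>t\<in>{0..T}. u t = u 0 + integral {0..t} u') \<longrightarrow>
     upwinded_interpolant \<alpha> \<beta> \<tau> T u v \<longrightarrow>
     integral {0..T} (\<lambda>t. (u t - v t)\<^sup>2) \<le> C * \<tau>\<^sup>2 * integral {0..T} (\<lambda>t. (u' t)\<^sup>2)"
proof (intro exI[of _ 1] allI impI)
  fix \<alpha> \<tau> :: real and u u' v :: "real \<Rightarrow> real"
  assume "\<alpha> > 0" "\<tau> > 0" "T / \<tau> \<in> \<nat>"
    and u': "u' integrable_on {0..T}" and u'2: "(\<lambda>t. (u' t)\<^sup>2) integrable_on {0..T}"
    and u: "\<forall>t\<in>{0..T}. u t = u 0 + integral {0..t} u'"
    and v: "upwinded_interpolant \<alpha> \<beta> \<tau> T u v"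
  obtain N :: nat where T_eq: "T = real N * \<tau>"
    using \<open>T / \<tau> \<in> \<nat>\<close> \<open>\<tau> > 0\<close> by (auto elim!: Nats_cases simp: field_simps)
  show "integral {0..T} (\<lambda>t. (u t - v t)\<^sup>2) \<le> 1 * \<tau>\<^sup>2 * integral {0..T} (\<lambda>t. (u' t)\<^sup>2)"
  proof (cases "(\<lambda>t. (u t - v t)\<^sup>2) integrable_on {0..T}")
    case False
    \<comment> \<open>then the left-hand side is the junk value \<open>0\<close>\<close>
    then show ?thesis
      using u'2 by (simp add: not_integrable_integral integral_nonneg)
  next
    case True
    have "integral {0..T} (\<lambda>t. (u t - v t)\<^sup>2) \<le> integral {0..T} (\<lambda>t. \<tau>\<^sup>2 * (u' t)\<^sup>2)"
      unfolding T_eq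
    proof (rule integral_le_by_uniform_mesh_cells)
      fix k assume "k < N"
      then have "real (Suc k) * \<tau> \<le> T"
        unfolding T_eq using \<open>\<tau> > 0\<close> by (intro mult_right_mono) auto
      from upwinded_interpolant_cell_error[OF v \<open>\<alpha> > 0\<close> \<open>\<beta> > 0\<close> _ this u' u'2 u True] \<open>\<tau> > 0\<close>
      show "integral {real k * \<tau>..real (Suc k) * \<tau>} (\<lambda>t. (u t - v t)\<^sup>2)
          \<le> integral {real k * \<tau>..real (Suc k) * \<tau>} (\<lambda>t. \<tau>\<^sup>2 * (u' t)\<^sup>2)"
        by simp
    qed (use True u'2 \<open>\<tau> > 0\<close> T_eq in auto)
    then show ?thesis
      by simp
  qed
qed

end
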